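(* Let $\mathbf A$ be a BBL transformation of bandwidth $(p,q)$ and $A=\mathbf P_{1,\infty}\mathbf A|_{\mathcal V_{1,\infty}}$ the associated infinite BBT transformation. Then $\mathbf P_{1,\infty}\ker\mathbf A\subseteq\ker P_BA$, and if the principal coefficient $a_{p'}$ is invertible, then $\ker P_BA=\mathbf P_{1,\infty}\ker\mathbf A$.
   Context: Fix $d\ge1$. $\mathcal V^S_d$: doubly infinite sequences $\{\psi_j\}_{j\in\mathbb Z}$, $\psi_j\in\mathbb C^d$. A matrix Laurent polynomial of bandwidth $(p,q)$ is $\sum_{r=p}^qa_rw^r$, integers $p\le q$, $a_r$ complex $d\times d$, $a_p\ne0\ne a_q$; its BBL transformation is $(\mathbf A\Psi)_j=\sum_ra_r\psi_{j+r}$. $p'=\min(p,0)$; the principal coefficient $a_{p'}$ equals $a_p$ if $p\le0$ and $0$ if $p>0$. $\mathcal V_{1,\infty}$ = sequences with $\psi_j=0$ for $j<1$ (identified with $\{\psi_j\}_{j\in\mathbb N}$); $\mathbf P_{1,\infty}$ zeroes all entries with $j<1$. On $\mathcal V_{1,\infty}$, $P_B$ is the projector setting $\psi_j=0$ for $j=1,\dots,-p'$ and leaving $\psi_j$ for $j>-p'$ unchanged (so $P_B=\mathbb 1$ if $p'=0$). *)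

theory Defs
  imports "HOL-Analysis.Analysis"
begin

text \<open>Dimension d is the cardinality of the finite index type 'd (so d \<ge> 1).\<close>

type_synonym ('d) seq = "int \<Rightarrow> complex ^ ('d::finite)"

definition bandwidth :: "(int \<Rightarrow> complex^('d::finite)^'d) \<Rightarrow> int \<Rightarrow> int \<Rightarrow> bool" where
  "bandwidth a p q \<longleftrightarrow> p \<le> q \<and> a p \<noteq> 0 \<and> a q \<noteq> 0 \<and> (\<forall>r. (r < p \<or> q < r) \<longrightarrow> a r = 0)"

definition BBL :: "(int \<Rightarrow> complex^('d::finite)^'d) \<Rightarrow> int \<Rightarrow> int \<Rightarrow> 'd seq \<Rightarrow> 'd seq" where
  "BBL a p q psi = (\<lambda>j. \<Sum>r\<in>{p..q}. a r *v psi (j + r))"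

definition P1inf :: "('d::finite) seq \<Rightarrow> 'd seq" where
  "P1inf psi = (\<lambda>j. if j < 1 then 0 else psi j)"

definition V1inf :: "('d::finite) seq set" where
  "V1inf = {psi. \<forall>j<1. psi j = 0}"

definition pprime :: "int \<Rightarrow> int" where
  "pprime p = min p 0"

definition principal_coeff :: "(int \<Rightarrow> complex^('d::finite)^'d) \<Rightarrow> int \<Rightarrow> complex^('d::finite)^'d" where
  "principal_coeff a p = (if p \<le> 0 then a p else 0)"

definition BBT :: "(int \<Rightarrow> complex^('d::finite)^'d) \<Rightarrow> int \<Rightarrow> int \<Rightarrow> 'd seq \<Rightarrow> 'd seq" where
  "BBT a p q psi = P1inf (BBL a p q psi)"

definition PB :: "int \<Rightarrow> ('d::finite) seq \<Rightarrow> 'd seq" where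
  "PB p psi = (\<lambda>j. if j \<le> - pprime p then 0 else psi j)"

definition kerBBL :: "(int \<Rightarrow> complex^('d::finite)^'d) \<Rightarrow> int \<Rightarrow> int \<Rightarrow> 'd seq set" where
  "kerBBL a p q = {psi. BBL a p q psi = (\<lambda>_. 0)}"

definition kerPBA :: "(int \<Rightarrow> complex^('d::finite)^'d) \<Rightarrow> int \<Rightarrow> int \<Rightarrow> 'd seq set" where
  "kerPBA a p q = {psi \<in> V1inf. PB p (BBT a p q psi) = (\<lambda>_. 0)}"

end

theory Submission
  imports Defs
begin

text \<open>A sequence \<phi> in the kernel of \<open>P\<^sub>B A\<close> already satisfies the difference equation
  \<open>(\<A>\<psi>)\<^sub>k = 0\<close> at every \<open>k > -p\<close>. When the coefficient \<open>a\<^sub>p\<close> of the lowest shift is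
  invertible, the equation at \<open>k \<le> -p\<close> can be solved for \<open>\<psi>\<^sub>k\<^sub>+\<^sub>p\<close> in terms of entries with
  larger index, so \<phi> extends to the left, by downward recursion, to a solution of
  \<open>\<A>\<psi> = 0\<close> on all of \<open>\<int>\<close>. The other inclusion is immediate because \<open>P\<^sub>B\<close> discards exactly
  the rows of \<open>A\<close> that see entries with non-positive index.\<close>

lemma not_invertible_zero_matrix: "\<not> invertible (0 :: 'a::field^'n^'n)"
proof
  assume "invertible (0 :: 'a^'n^'n)"
  then obtain B :: "'a^'n^'n" where "0 ** B = mat 1"
    by (auto simp: invertible_right_inverse)
  then have "(mat 1 :: 'a^'n^'n) = 0" by simp
  then have "(mat 1 :: 'a^'n^'n) $ i $ i = 0" for i by simp
  then show False by (simp add: mat_def)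
qed

lemma invertible_principal_coeff:
  assumes "invertible (principal_coeff a p)"
  shows "p \<le> 0" and "invertible (a p)"
  using assms not_invertible_zero_matrix by (auto simp: principal_coeff_def split: if_splits)

lemma BBL_cong:
  assumes "\<And>r. r \<in> {p..q} \<Longrightarrow> \<phi> (k + r) = \<psi> (k + r)"
  shows "BBL a p q \<phi> k = BBL a p q \<psi> k"
  unfolding BBL_def using assms by (auto intro!: sum.cong)

lemma BBL_split_lowest:
  assumes "p \<le> q"
  shows "BBL a p q \<psi> k = a p *v \<psi> (k + p) + (\<Sum>r\<in>{p<..q}. a r *v \<psi> (k + r))"
proof -
  have "{p..q} = insert p {p<..q}" using assms by auto
  then show ?thesis unfolding BBL_def by simp
qed

text \<open>\<open>B\<close> plays the role of \<open>a\<^sub>p\<^sup>-\<^sup>1\<close>; the recursion terminates because \<open>r > p\<close>.\<close>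
function left_extension ::
  "complex^'d^'d \<Rightarrow> (int \<Rightarrow> complex^'d::finite^'d) \<Rightarrow> int \<Rightarrow> int \<Rightarrow> 'd seq \<Rightarrow> 'd seq" where
  "left_extension B a p q \<phi> j =
     (if 1 \<le> j then \<phi> j
      else - (B *v (\<Sum>r\<in>{p<..q}. a r *v left_extension B a p q \<phi> (j - p + r))))"
  by auto
termination by (relation "Wellfounded.measure (\<lambda>(B, a, p, q, \<phi>, j). nat (1 - j))") auto

declare left_extension.simps [simp del]

lemma left_extension_eq [simp]: "1 \<le> j \<Longrightarrow> left_extension B a p q \<phi> j = \<phi> j"
  by (simp add: left_extension.simps)

lemma BBL_left_extension_eq_0:
  assumes "a p ** B = mat 1" and "p \<le> q" and "k + p \<le> 0"
  shows "BBL a p q (left_extension B a p q \<phi>) k = 0"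
proof -
  let ?\<psi> = "left_extension B a p q \<phi>"
  let ?S = "\<Sum>r\<in>{p<..q}. a r *v ?\<psi> (k + r)"
  have "?\<psi> (k + p) = - (B *v ?S)"
    using assms(3) by (subst left_extension.simps) (simp add: algebra_simps)
  then have "a p *v ?\<psi> (k + p) = - (a p *v (B *v ?S))"
    using linear_neg[OF matrix_vector_mul_linear] by metis
  also have "\<dots> = - ?S" by (simp add: matrix_vector_mul_assoc assms(1))
  finally have "a p *v ?\<psi> (k + p) = - ?S" .
  then show ?thesis by (simp add: BBL_split_lowest[OF assms(2)])
qed

lemma P1inf_kerBBL_subset_kerPBA: "P1inf ` kerBBL a p q \<subseteq> kerPBA a p q"
proof
  fix \<phi> assume "\<phi> \<in> P1inf ` kerBBL a p q"
  then obtain \<psi> where \<psi>: "BBL a p q \<psi> = (\<lambda>_. 0)" and \<phi>: "\<phi> = P1inf \<psi>"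
    unfolding kerBBL_def by auto
  have "PB p (BBT a p q \<phi>) k = 0" for k
  proof (cases "k \<le> - pprime p \<or> k < 1")
    case False
    then have "BBL a p q \<phi> k = BBL a p q \<psi> k"
      by (intro BBL_cong) (auto simp: \<phi> P1inf_def pprime_def)
    with False \<psi> show ?thesis by (simp add: PB_def BBT_def P1inf_def)
  qed (auto simp: PB_def BBT_def P1inf_def)
  moreover have "\<phi> \<in> V1inf" by (simp add: \<phi> V1inf_def P1inf_def)
  ultimately show "\<phi> \<in> kerPBA a p q" by (auto simp: kerPBA_def)
qed

lemma kerPBA_subset_P1inf_kerBBL:
  assumes "a p ** B = mat 1" and "p \<le> 0" and "p \<le> q"
  shows "kerPBA a p q \<subseteq> P1inf ` kerBBL a p q"
proof
  fix \<phi> assume \<phi>: "\<phi> \<in> kerPBA a p q"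
  let ?\<psi> = "left_extension B a p q \<phi>"
  have "BBL a p q ?\<psi> k = 0" for k
  proof (cases "k + p \<le> 0")
    case True
    with assms(1,3) show ?thesis by (rule BBL_left_extension_eq_0)
  next
    case False
    then have "BBL a p q ?\<psi> k = BBL a p q \<phi> k" by (intro BBL_cong) auto
    also have "\<dots> = PB p (BBT a p q \<phi>) k"
      using False assms(2) by (simp add: PB_def BBT_def P1inf_def pprime_def)
    also have "\<dots> = 0" using \<phi> by (simp add: kerPBA_def)
    finally show ?thesis .
  qed
  then have "?\<psi> \<in> kerBBL a p q" by (simp add: kerBBL_def fun_eq_iff)
  moreover have "\<phi> = P1inf ?\<psi>"
    using \<phi> by (auto simp: P1inf_def fun_eq_iff kerPBA_def V1inf_def)
  ultimately show "\<phi> \<in> P1inf ` kerBBL a p q" by blast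
qed

theorem mainTheorem16:
  fixes a :: "int \<Rightarrow> complex^'d^'d" and p q :: int
  assumes "bandwidth a p q"
  shows "P1inf ` kerBBL a p q \<subseteq> kerPBA a p q \<and>
         (invertible (principal_coeff a p) \<longrightarrow> kerPBA a p q = P1inf ` kerBBL a p q)"
proof (intro conjI impI)
  show "P1inf ` kerBBL a p q \<subseteq> kerPBA a p q" by (rule P1inf_kerBBL_subset_kerPBA)
  assume "invertible (principal_coeff a p)"
  then have "p \<le> 0" and "invertible (a p)" by (rule invertible_principal_coeff)+
  then obtain B where "a p ** B = mat 1" by (auto simp: invertible_right_inverse)
  moreover have "p \<le> q" using assms by (simp add: bandwidth_def)
  ultimately have "kerPBA a p q \<subseteq> P1inf ` kerBBL a p q"
    using \<open>p \<le> 0\<close> kerPBA_subset_P1inf_kerBBL by blast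
  with P1inf_kerBBL_subset_kerPBA show "kerPBA a p q = P1inf ` kerBBL a p q" by blast
qed

end
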